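(* Let $q$ be a prime. For any positive integer $N\leqslant q^{1/2}$ we have $$E_q(N)\leqslant N^6q^{-1+o(1)}+N^2q^{o(1)},$$ where $o(1)\to0$ as $q\to\infty$.
   Context: $a\sim A$ means $A\leqslant a<2A$. $E_q(N)=\#\{(u,v,x,y)\in\mathbb{F}_q^4:\ u^2,v^2,x^2,y^2\sim N,\ u+v=x+y\}$, where $u^2,v^2,x^2,y^2$ are computed modulo $q$ and represented by their residues in $\{0,\dots,q-1\}$. *)

theory Defs
  imports Complex_Main "HOL-Computational_Algebra.Primes"
begin

text \<open>a \<sim> A means A \<le> a < 2A. Elements of F_q are represented by residues {0..q-1};
  squares are reduced mod q.\<close>
definition sim :: "nat \<Rightarrow> nat \<Rightarrow> bool" where
  "sim a A \<longleftrightarrow> A \<le> a \<and> a < 2 * A"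

definition Eq :: "nat \<Rightarrow> nat \<Rightarrow> nat" where
  "Eq q N = card {(u, v, x, y). u < q \<and> v < q \<and> x < q \<and> y < q \<and>
      sim (u^2 mod q) N \<and> sim (v^2 mod q) N \<and> sim (x^2 mod q) N \<and> sim (y^2 mod q) N \<and>
      (u + v) mod q = (x + y) mod q}"

end

theory Submission
  imports Defs "HOL-Number_Theory.Cong"
begin

(* Squaring sends a solution (u, v, x, y) to a point (a, b, c, d) of [N, 2N)^4 at which q divides
   an integer polynomial obtained by eliminating the square roots from u + v = x + y, and each
   point has at most 8 preimages. With T = (c - d)^2 - (a - b)^2 and D = c + d - a - b this
   polynomial is T^2 - D (4 (a + b) T - 4 D (a - b)^2). If T = 0, primality and N^2 <= q force
   D = 0 or a = b, which leaves at most 3 N^2 points. Otherwise the polynomial equals k q with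
   |k| << N^4 / q, so D divides T^2 - k q, which is nonzero as q does not divide T. Since
   D is nonzero too and (a - b, c - d, k, D) determines the point, the divisor bound
   d(n) << n^delta gives O(N^2 (N^4 / q + 1) q^delta) points. *)

lemma card_divisors_mult_le:
  fixes a b :: nat
  shows "card {d. d dvd a * b} \<le> card {d. d dvd a} * card {d. d dvd b}"
proof (cases "a = 0 \<or> b = 0")
  case True
  then show ?thesis
    by (auto simp: infinite_UNIV_nat)
next
  case False
  let ?D = "{d. d dvd a} \<times> {d. d dvd b}"
  have fin: "finite ?D"
    using False by simp
  have "{d. d dvd a * b} \<subseteq> (\<lambda>(x, y). x * y) ` ?D"
    by (auto elim!: dvd_productE)
  then have "card {d. d dvd a * b} \<le> card ((\<lambda>(x, y). x * y) ` ?D)"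
    using fin by (intro card_mono finite_imageI)
  also have "\<dots> \<le> card ?D"
    using fin by (rule card_image_le)
  finally show ?thesis
    by (simp add: card_cartesian_product)
qed

lemma card_divisors_prime_power:
  fixes p :: nat
  assumes "prime p"
  shows "card {d. d dvd p ^ e} = Suc e"
proof -
  have "{d. d dvd p ^ e} = (\<lambda>i. p ^ i) ` {..e}"
    using divides_primepow_nat[OF assms] by auto
  moreover have "inj_on (\<lambda>i. p ^ i) {..e}"
    using prime_gt_1_nat[OF assms] by (auto intro!: inj_onI)
  ultimately show ?thesis
    by (simp add: card_image)
qed

lemma card_divisors_prod_prime_powers_le:
  fixes P :: "nat set"
  assumes "finite P" "\<And>p. p \<in> P \<Longrightarrow> prime p"
  shows "card {d. d dvd (\<Prod>p\<in>P. p ^ e p)} \<le> (\<Prod>p\<in>P. Suc (e p))"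
  using assms
proof (induction P rule: finite_induct)
  case (insert p P)
  have "card {d. d dvd (\<Prod>p\<in>insert p P. p ^ e p)}
      \<le> card {d. d dvd p ^ e p} * card {d. d dvd (\<Prod>p\<in>P. p ^ e p)}"
    using insert.hyps by (simp add: card_divisors_mult_le)
  also have "\<dots> \<le> Suc (e p) * (\<Prod>p\<in>P. Suc (e p))"
    using insert by (simp only: card_divisors_prime_power mult_le_mono2 insertI1 insertI2)
  finally show ?case
    using insert.hyps by simp
qed simp

lemma linear_le_const_mult_exponential:
  fixes \<delta> :: real
  assumes "\<delta> > 0"
  obtains K where "K \<ge> 1" "\<And>e::nat. real e + 1 \<le> K * 2 powr (\<delta> * e)"
proof
  define K where "K = max 1 (1 / (\<delta> * ln 2))"
  show "K \<ge> 1"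
    by (simp add: K_def)
  fix e :: nat
  have "1 \<le> K * (\<delta> * ln 2)"
    using assms by (auto simp: K_def max_def field_simps)
  then have "real e \<le> K * (\<delta> * ln 2) * e"
    using mult_right_mono[of 1 _ "real e"] by simp
  then have "real e + 1 \<le> K * (1 + \<delta> * e * ln 2)"
    using \<open>K \<ge> 1\<close> by (simp add: algebra_simps)
  also have "1 + \<delta> * e * ln 2 \<le> 2 powr (\<delta> * e)"
    using exp_ge_add_one_self[of "\<delta> * e * ln 2"] by (simp add: powr_def mult.commute)
  finally show "real e + 1 \<le> K * 2 powr (\<delta> * e)"
    using \<open>K \<ge> 1\<close> by simp
qed

lemma divisor_count_bound:
  fixes \<delta> :: real
  assumes "\<delta> > 0"
  obtains C where "C > 0" "\<And>n. n > 0 \<Longrightarrow> real (card {d. d dvd n}) \<le> C * real n powr \<delta>"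
proof -
  obtain K where K: "K \<ge> 1" "\<And>e::nat. real e + 1 \<le> K * 2 powr (\<delta> * e)"
    using linear_le_const_mult_exponential[OF assms] by blast
  define P0 :: nat where "P0 = nat \<lceil>2 powr (1 / \<delta>)\<rceil>"
  \<comment> \<open>A prime power \<open>p ^ e\<close> has \<open>e + 1 \<le> h p * (p ^ e) powr \<delta>\<close> divisors,
    and \<open>h p = 1\<close> for all but finitely many primes.\<close>
  define h where "h p = (if p < P0 then K else 1)" for p :: nat
  have prime_power_bound: "real (Suc e) \<le> h p * real p powr (\<delta> * e)" if "prime p" for p e
  proof (cases "p < P0")
    case True
    have "real (Suc e) \<le> K * 2 powr (\<delta> * e)"
      using K(2)[of e] by (simp add: add.commute)
    also have "\<dots> \<le> K * real p powr (\<delta> * e)"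
      using K(1) prime_ge_2_nat[OF that] assms by (intro mult_left_mono powr_mono2) auto
    finally show ?thesis
      using True by (simp add: h_def)
  next
    case False
    have "2 powr (1 / \<delta>) \<le> real p"
      using False unfolding P0_def by linarith
    then have "(2 powr (1 / \<delta>)) powr \<delta> \<le> real p powr \<delta>"
      using assms by (intro powr_mono2) auto
    then have p_large: "2 \<le> real p powr \<delta>"
      using assms by (simp add: powr_powr)
    have "real (Suc e) \<le> 2 ^ e"
      using Suc_leI[OF less_exp[of e]] by (metis of_nat_le_iff of_nat_numeral of_nat_power)
    also have "\<dots> \<le> (real p powr \<delta>) ^ e"
      using p_large by (intro power_mono) auto
    also have "\<dots> = real p powr (\<delta> * e)"
      using prime_gt_0_nat[OF that] by (simp add: powr_power mult.commute)
    finally show ?thesis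
      using False by (simp add: h_def)
  qed
  show ?thesis
  proof
    show "K ^ P0 > 0"
      using K(1) by simp
    fix n :: nat
    assume "n > 0"
    define e where "e p = multiplicity p n" for p
    let ?P = "prime_factors n"
    have n_eq: "n = (\<Prod>p\<in>?P. p ^ e p)"
      using prod_prime_factors[of n] \<open>n > 0\<close> by (simp add: e_def)
    have "real (card {d. d dvd n}) \<le> (\<Prod>p\<in>?P. real (Suc (e p)))"
      using card_divisors_prod_prime_powers_le[of ?P e] n_eq
      by (metis in_prime_factors_imp_prime finite_set_mset of_nat_le_iff of_nat_prod)
    also have "\<dots> \<le> (\<Prod>p\<in>?P. h p * real p powr (\<delta> * e p))"
      using prime_power_bound by (intro prod_mono) auto
    also have "\<dots> = (\<Prod>p\<in>?P. h p) * real n powr \<delta>"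
    proof -
      have "real n powr \<delta> = (\<Prod>p\<in>?P. (real p ^ e p) powr \<delta>)"
        by (subst n_eq) (simp add: prod_powr_distrib)
      also have "\<dots> = (\<Prod>p\<in>?P. real p powr (\<delta> * e p))"
      proof (intro prod.cong refl)
        fix p
        assume "p \<in> ?P"
        then have "real p > 0"
          by (simp add: in_prime_factors_imp_prime prime_gt_0_nat)
        then show "(real p ^ e p) powr \<delta> = real p powr (\<delta> * e p)"
          by (simp add: powr_realpow [symmetric] powr_powr mult.commute)
      qed
      finally show ?thesis
        by (simp add: prod.distrib)
    qed
    also have "(\<Prod>p\<in>?P. h p) \<le> K ^ P0"
    proof -
      have "(\<Prod>p\<in>?P. h p) = K ^ card {p \<in> ?P. p < P0}"
        by (simp add: h_def prod.inter_filter [symmetric])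
      also have "\<dots> \<le> K ^ P0"
        using K(1) card_mono[of "{..<P0}" "{p \<in> ?P. p < P0}"] by (intro power_increasing) auto
      finally show ?thesis .
    qed
    finally show "real (card {d. d dvd n}) \<le> K ^ P0 * real n powr \<delta>"
      by (simp add: mult_right_mono)
  qed
qed

lemma card_int_divisors_le:
  fixes M :: int
  assumes "M \<noteq> 0"
  shows "card {D. D dvd M} \<le> 2 * card {d. d dvd nat \<bar>M\<bar>}"
proof -
  let ?A = "{d. d dvd nat \<bar>M\<bar>}"
  let ?f = "\<lambda>(s, d). s * int d"
  have "{D. D dvd M} \<subseteq> ?f ` ({1, -1} \<times> ?A)"
  proof
    fix D
    assume "D \<in> {D. D dvd M}"
    then have "D \<noteq> 0" and "nat \<bar>D\<bar> dvd nat \<bar>M\<bar>"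
      using assms by auto
    then have "(sgn D, nat \<bar>D\<bar>) \<in> {1, -1} \<times> ?A"
      by (simp add: sgn_if)
    moreover have "D = ?f (sgn D, nat \<bar>D\<bar>)"
      by (simp add: sgn_mult_abs)
    ultimately show "D \<in> ?f ` ({1, -1} \<times> ?A)"
      by blast
  qed
  moreover have fin: "finite ({1, -1 :: int} \<times> ?A)"
    using assms by (intro finite_SigmaI finite_divisors_nat) auto
  ultimately have "card {D. D dvd M} \<le> card (?f ` ({1, -1} \<times> ?A))"
    by (intro card_mono finite_imageI)
  also have "\<dots> \<le> card ({1, -1 :: int} \<times> ?A)"
    using fin by (rule card_image_le)
  finally show ?thesis
    by (simp add: card_cartesian_product)
qed

lemma card_square_roots_mod_prime:
  fixes q a :: nat
  assumes "prime q"
  shows "card {u. u < q \<and> [u^2 = a] (mod q)} \<le> 2"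
proof (cases "{u. u < q \<and> [u^2 = a] (mod q)} = {}")
  case True
  then show ?thesis
    unfolding True by simp
next
  case False
  then obtain w where w: "w < q" "[w^2 = a] (mod q)"
    by blast
  have "{u. u < q \<and> [u^2 = a] (mod q)} \<subseteq> {w, q - w}"
  proof safe
    fix u
    assume u: "u < q" "[u^2 = a] (mod q)" "u \<noteq> w"
    have "[int u ^ 2 = int w ^ 2] (mod int q)"
      using u(2) w(2) by (metis cong_int_iff cong_sym cong_trans of_nat_power)
    then have "int q dvd (int u - int w) * (int u + int w)"
      by (simp add: cong_iff_dvd_diff power2_eq_square algebra_simps)
    moreover have "\<not> int q dvd int u - int w"
      using u w by (metis cong_iff_dvd_diff cong_int_iff cong_less_modulus_unique_nat)
    ultimately have "q dvd u + w"
      using assms by (simp add: prime_dvd_mult_iff flip: of_nat_add)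
    then obtain k where k: "u + w = q * k"
      by blast
    have "k < 2"
      using k u(1) w(1) by (metis add_less_mono mult_2_right mult_less_cancel1 not_less_zero)
    then show "u = q - w"
      using k u(3) by (cases k) auto
  qed
  then have "card {u. u < q \<and> [u^2 = a] (mod q)} \<le> card {w, q - w}"
    by (intro card_mono) auto
  also have "\<dots> \<le> 2"
    by (simp add: card_insert_le_m1)
  finally show ?thesis .
qed

lemma dvd_abs_less_imp_zero:
  fixes m z :: int
  assumes "m dvd z" "\<bar>z\<bar> < \<bar>m\<bar>"
  shows "z = 0"
  using assms dvd_imp_le_int[of z m] by (cases "z = 0") auto

text \<open>
  \<open>root_sum_poly s a b\<close> is the monic polynomial in \<open>s\<close> with roots \<open>\<plusminus>\<surd>a \<plusminus> \<surd>b\<close>. Eliminating \<open>s\<close>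
  from \<open>root_sum_poly s a b = root_sum_poly s c d = 0\<close> gives \<open>eliminant a b c d\<close>
  (see \<open>eliminant_eq_combination\<close>), which therefore vanishes at the squares of \<open>u, v, x, y\<close>
  whenever \<open>u + v = x + y\<close>.
\<close>
definition root_sum_poly :: "int \<Rightarrow> int \<Rightarrow> int \<Rightarrow> int" where
  "root_sum_poly s a b = s^4 - 2 * s^2 * (a + b) + (a - b)^2"

definition eliminant :: "int \<Rightarrow> int \<Rightarrow> int \<Rightarrow> int \<Rightarrow> int" where
  "eliminant a b c d =
     ((c - d)^2 - (a - b)^2)^2 - 4 * (c + d - a - b) * (a + b) * ((c - d)^2 - (a - b)^2)
     + 4 * (c + d - a - b)^2 * (a - b)^2"

lemma root_sum_poly_squares: "root_sum_poly (u + v) (u^2) (v^2) = 0"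
  unfolding root_sum_poly_def by algebra

lemma eliminant_eq_combination:
  fixes a b c d s :: int
  shows "eliminant a b c d =
     4 * (c + d - a - b)^2 * root_sum_poly s a b
     + (root_sum_poly s a b - root_sum_poly s c d)
       * (root_sum_poly s a b - root_sum_poly s c d - 4 * s^2 * (c + d - a - b)
          + 4 * (c + d - a - b) * (a + b))"
  unfolding eliminant_def root_sum_poly_def by algebra

lemma eliminant_squares:
  fixes u v x y :: int
  assumes "u + v = x + y"
  shows "eliminant (u^2) (v^2) (x^2) (y^2) = 0"
  using root_sum_poly_squares[of u v] root_sum_poly_squares[of x y]
  by (simp add: eliminant_eq_combination[where s = "u + v"] assms)

lemma eliminant_cong:
  assumes "[a = a'] (mod m)" "[b = b'] (mod m)" "[c = c'] (mod m)" "[d = d'] (mod m)"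
  shows "[eliminant a b c d = eliminant a' b' c' d'] (mod m)"
  unfolding eliminant_def using assms by (intro cong_add cong_diff cong_mult cong_pow cong_refl)

lemma dvd_eliminant_squares_mod:
  fixes u v x y q :: nat
  assumes "(u + v) mod q = (x + y) mod q"
  shows "int q dvd eliminant (int (u^2 mod q)) (int (v^2 mod q)) (int (x^2 mod q)) (int (y^2 mod q))"
proof -
  define y' where "y' = int u + int v - int x"
  have square_mod: "[int (z^2 mod q) = int z ^ 2] (mod int q)" for z
    by (simp add: cong_def zmod_int)
  have "[int x + int y = int u + int v] (mod int q)"
    using assms by (metis cong_def cong_int_iff of_nat_add)
  then have "[int y = y'] (mod int q)"
    unfolding y'_def by (metis add_diff_cancel_left' cong_diff cong_refl)
  then have "[int (y^2 mod q) = y'^2] (mod int q)"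
    using square_mod cong_pow cong_trans by blast
  then have "[eliminant (int (u^2 mod q)) (int (v^2 mod q)) (int (x^2 mod q)) (int (y^2 mod q))
      = eliminant (int u ^ 2) (int v ^ 2) (int x ^ 2) (y'^2)] (mod int q)"
    using square_mod by (intro eliminant_cong)
  also have "eliminant (int u ^ 2) (int v ^ 2) (int x ^ 2) (y'^2) = 0"
    by (rule eliminant_squares) (simp add: y'_def)
  finally show ?thesis
    by (simp add: cong_0_iff)
qed

lemma dvd_square_minus_eliminant:
  "c + d - a - b dvd ((c - d)^2 - (a - b)^2)^2 - eliminant a b c d"
proof
  show "((c - d)^2 - (a - b)^2)^2 - eliminant a b c d
      = (c + d - a - b) * (4 * (a + b) * ((c - d)^2 - (a - b)^2) - 4 * (c + d - a - b) * (a - b)^2)"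
    unfolding eliminant_def by algebra
qed

lemma abs_eliminant_le:
  fixes a b c d n :: int
  assumes "{a, b, c, d} \<subseteq> {n..<2 * n}"
  shows "\<bar>eliminant a b c d\<bar> \<le> 49 * n^4"
proof -
  define T where "T = (c - d)^2 - (a - b)^2"
  define D where "D = c + d - a - b"
  have n: "n \<ge> 0" and "\<bar>a - b\<bar> \<le> n" "\<bar>c - d\<bar> \<le> n"
    and D: "\<bar>D\<bar> \<le> 2 * n" and m: "\<bar>a + b\<bar> \<le> 4 * n"
    using assms by (auto simp: D_def)
  then have P: "(a - b)^2 \<le> n^2" "(c - d)^2 \<le> n^2"
    by (metis abs_le_square_iff abs_of_nonneg)+
  then have T: "\<bar>T\<bar> \<le> n^2"
    using zero_le_power2[of "a - b"] zero_le_power2[of "c - d"] unfolding T_def abs_le_iff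
    by linarith
  have "eliminant a b c d = T^2 - 4 * (D * (a + b) * T) + 4 * (D^2 * (a - b)^2)"
    by (simp add: eliminant_def T_def D_def)
  then have "\<bar>eliminant a b c d\<bar>
      \<le> \<bar>T^2\<bar> + \<bar>4 * (D * (a + b) * T)\<bar> + \<bar>4 * (D^2 * (a - b)^2)\<bar>"
    by arith
  also have "\<dots> = \<bar>T\<bar>^2 + 4 * (\<bar>D\<bar> * \<bar>a + b\<bar> * \<bar>T\<bar>) + 4 * (\<bar>D\<bar>^2 * (a - b)^2)"
    by (simp add: abs_mult power_abs)
  also have "\<dots> \<le> (n^2)^2 + 4 * (2 * n * (4 * n) * n^2) + 4 * ((2 * n)^2 * n^2)"
  proof -
    have "\<bar>T\<bar>^2 \<le> (n^2)^2"
      using T by (intro power_mono) auto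
    moreover have "\<bar>D\<bar> * \<bar>a + b\<bar> * \<bar>T\<bar> \<le> 2 * n * (4 * n) * n^2"
      using n D m T by (intro mult_mono) auto
    moreover have "\<bar>D\<bar>^2 * (a - b)^2 \<le> (2 * n)^2 * n^2"
      using n by (intro mult_mono[OF power_mono[OF D] P(1)]) auto
    ultimately show ?thesis
      by linarith
  qed
  also have "\<dots> = 49 * n^4"
    by algebra
  finally show ?thesis .
qed

lemma eliminant_determines:
  fixes a b c d a' b' c' d' :: int
  assumes "a - b = a' - b'" "c - d = c' - d'" "c + d - a - b = c' + d' - a' - b'"
    and "eliminant a b c d = eliminant a' b' c' d'"
    and "c + d - a - b \<noteq> 0" "(c - d)^2 \<noteq> (a - b)^2"
  shows "(a, b, c, d) = (a', b', c', d')"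
proof -
  have "eliminant a b c d - eliminant a' b' c' d'
      = 4 * (c + d - a - b) * ((c - d)^2 - (a - b)^2) * ((a' + b') - (a + b))"
    using assms(1-3) unfolding eliminant_def by algebra
  then have "a' + b' = a + b"
    using assms(4-6) by simp
  then show ?thesis
    using assms(1-3) by auto
qed

definition eliminant_zeros :: "nat \<Rightarrow> nat \<Rightarrow> (int \<times> int \<times> int \<times> int) set" where
  "eliminant_zeros q N =
     {(a, b, c, d). {a, b, c, d} \<subseteq> {int N..<2 * int N} \<and> int q dvd eliminant a b c d}"

lemma finite_eliminant_zeros: "finite (eliminant_zeros q N)"
proof (rule finite_subset)
  let ?I = "{int N..<2 * int N}"
  show "eliminant_zeros q N \<subseteq> ?I \<times> ?I \<times> ?I \<times> ?I"
    by (auto simp: eliminant_zeros_def)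
qed simp

lemma Eq_le_card_eliminant_zeros:
  assumes "prime q"
  shows "Eq q N \<le> 8 * card (eliminant_zeros q N)"
proof -
  define A where "A = {(u, v, x, y). u < q \<and> v < q \<and> x < q \<and> y < q \<and>
      sim (u^2 mod q) N \<and> sim (v^2 mod q) N \<and> sim (x^2 mod q) N \<and> sim (y^2 mod q) N \<and>
      (u + v) mod q = (x + y) mod q}"
  define R where "R a = {u. u < q \<and> [u^2 = nat a] (mod q)}" for a :: int
  define res where "res u = int (u^2 mod q)" for u
  define \<psi> where "\<psi> = (\<lambda>(u, v, x, y). ((res u, res v, res x, res y), u, v, x))"
  let ?B = "Sigma (eliminant_zeros q N) (\<lambda>(a, b, c, _). R a \<times> R b \<times> R c)"
  have inj: "inj_on \<psi> A"
  proof (rule inj_onI)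
    fix s t
    assume "s \<in> A" "t \<in> A" "\<psi> s = \<psi> t"
    moreover obtain u v x y u' v' x' y' where st: "s = (u, v, x, y)" "t = (u', v', x', y')"
      by (metis prod_cases4)
    ultimately have "u' = u" "v' = v" "x' = x" "[x + y = x + y'] (mod q)" "y < q" "y' < q"
      by (auto simp: A_def \<psi>_def cong_def)
    then show "s = t"
      unfolding st by (metis cong_add_lcancel_nat cong_less_modulus_unique_nat)
  qed
  have sub: "\<psi> ` A \<subseteq> ?B"
  proof (rule image_subsetI)
    fix s
    assume "s \<in> A"
    moreover obtain u v x y where s: "s = (u, v, x, y)"
      by (metis prod_cases4)
    ultimately show "\<psi> s \<in> ?B"
      using dvd_eliminant_squares_mod[of u v q x y]
      by (auto simp: A_def \<psi>_def res_def R_def eliminant_zeros_def sim_def cong_def)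
  qed
  have fin: "finite ?B"
    by (auto simp: R_def intro!: finite_SigmaI finite_eliminant_zeros)
  have "Eq q N = card (\<psi> ` A)"
    using inj by (simp add: Eq_def A_def card_image)
  also have "\<dots> \<le> card ?B"
    using fin sub by (rule card_mono)
  also have "\<dots> = (\<Sum>(a, b, c, _) \<in> eliminant_zeros q N. card (R a) * card (R b) * card (R c))"
    by (subst card_SigmaI) (auto simp: R_def finite_eliminant_zeros card_cartesian_product
        intro!: sum.cong)
  also have "\<dots> \<le> (\<Sum>_ \<in> eliminant_zeros q N. 2 * 2 * 2)"
  proof (intro sum_mono, clarify)
    fix a b c d
    show "card (R a) * card (R b) * card (R c) \<le> 2 * 2 * 2"
      using card_square_roots_mod_prime[OF assms] unfolding R_def by (intro mult_le_mono)
  qed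
  finally show ?thesis
    by simp
qed

definition degenerate :: "int \<times> int \<times> int \<times> int \<Rightarrow> bool" where
  "degenerate = (\<lambda>(a, b, c, d). (c - d)^2 = (a - b)^2)"

lemma card_degenerate_eliminant_zeros:
  assumes "prime q" "q > 2" "N^2 \<le> q"
  shows "card {t \<in> eliminant_zeros q N. degenerate t} \<le> 3 * N^2"
proof -
  define I where "I = {int N..<2 * int N}"
  have "2 * int N - 2 < int N ^ 2"
    using zero_le_power2[of "int N - 1"] by (simp add: power2_eq_square algebra_simps)
  moreover have "int N ^ 2 \<le> int q"
    using assms(3) by (metis of_nat_le_iff of_nat_power)
  ultimately have width_lt_q: "2 * int N - 2 < int q"
    by linarith
  have "\<not> q dvd 2"
    using assms(2) by (auto dest: dvd_imp_le)
  then have "\<not> q dvd 2 * 2"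
    using assms(1) prime_dvd_mult_nat by blast
  then have q_not_dvd_4: "\<not> int q dvd 4"
    by (metis int_dvd_int_iff mult_2_right numeral_Bit0 of_nat_numeral)
  let ?X = "(\<lambda>(a, c). (a, a, c, c)) ` (I \<times> I)"
  let ?Y = "(\<lambda>(a, b). (a, b, a, b)) ` (I \<times> I)"
  let ?Z = "(\<lambda>(a, b). (a, b, b, a)) ` (I \<times> I)"
  have "{t \<in> eliminant_zeros q N. degenerate t} \<subseteq> ?X \<union> ?Y \<union> ?Z"
  proof (rule subsetI)
    fix t
    assume t: "t \<in> {t \<in> eliminant_zeros q N. degenerate t}"
    obtain a b c d where abcd: "t = (a, b, c, d)"
      by (metis prod_cases4)
    have box: "a \<in> I" "b \<in> I" "c \<in> I" "d \<in> I" and "int q dvd eliminant a b c d"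
      and T0: "(c - d)^2 = (a - b)^2"
      using t by (auto simp: abcd eliminant_zeros_def degenerate_def I_def)
    moreover have "eliminant a b c d = 4 * ((c + d - a - b)^2 * (a - b)^2)"
      using T0 by (simp add: eliminant_def)
    ultimately have "int q dvd (c + d - a - b)^2 \<or> int q dvd (a - b)^2"
      using assms(1) q_not_dvd_4 by (simp add: prime_dvd_mult_iff)
    then have "int q dvd c + d - a - b \<or> int q dvd a - b"
      using assms(1) prime_dvd_power[of "int q"] by auto
    moreover have "\<bar>c + d - a - b\<bar> < \<bar>int q\<bar>" "\<bar>a - b\<bar> < \<bar>int q\<bar>"
      using box width_lt_q by (auto simp: I_def)
    ultimately have "c + d - a - b = 0 \<or> a - b = 0"
      using dvd_abs_less_imp_zero by blast
    then have "(c = a \<and> d = b) \<or> (c = b \<and> d = a) \<or> (a = b \<and> c = d)"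
      using T0 by (auto simp: power2_eq_iff)
    then show "t \<in> ?X \<union> ?Y \<union> ?Z"
    proof (elim disjE conjE)
      assume "c = a" "d = b"
      then show ?thesis
        using box unfolding abcd by (intro UnI1 UnI2 rev_image_eqI[of "(a, b)"]) auto
    next
      assume "c = b" "d = a"
      then show ?thesis
        using box unfolding abcd by (intro UnI2 rev_image_eqI[of "(a, b)"]) auto
    next
      assume "a = b" "c = d"
      then show ?thesis
        using box unfolding abcd by (intro UnI1 rev_image_eqI[of "(a, c)"]) auto
    qed
  qed
  then have "card {t \<in> eliminant_zeros q N. degenerate t} \<le> card (?X \<union> ?Y \<union> ?Z)"
    by (intro card_mono) (simp_all add: I_def)
  also have "\<dots> \<le> card ?X + card ?Y + card ?Z"
    using card_Un_le[of ?X ?Y] card_Un_le[of "?X \<union> ?Y" ?Z] by linarith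
  also have "\<dots> \<le> card (I \<times> I) + card (I \<times> I) + card (I \<times> I)"
    by (intro add_mono card_image_le) (simp_all add: I_def)
  also have "card (I \<times> I) = N^2"
    by (simp add: I_def card_cartesian_product power2_eq_square)
  finally show ?thesis
    by linarith
qed

lemma abs_diff_squares_less:
  fixes p r n :: int
  assumes "\<bar>p\<bar> < n" "\<bar>r\<bar> < n"
  shows "\<bar>r^2 - p^2\<bar> < n^2"
proof -
  have "\<bar>p\<bar>^2 < n^2" "\<bar>r\<bar>^2 < n^2"
    using assms by (intro power_strict_mono; simp)+
  moreover have "0 \<le> p^2" "0 \<le> r^2"
    by simp_all
  ultimately show ?thesis
    unfolding power2_abs abs_less_iff by linarith
qed

lemma not_dvd_square_diff_squares:
  fixes p r :: int
  assumes "prime q" "N^2 \<le> q" "\<bar>p\<bar> < int N" "\<bar>r\<bar> < int N" "r^2 \<noteq> p^2"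
  shows "\<not> int q dvd (r^2 - p^2)^2"
proof
  have "int N ^ 2 \<le> int q"
    using assms(2) by (metis of_nat_le_iff of_nat_power)
  then have "\<bar>r^2 - p^2\<bar> < \<bar>int q\<bar>"
    using abs_diff_squares_less[OF assms(3,4)] by linarith
  moreover assume "int q dvd (r^2 - p^2)^2"
  then have "int q dvd r^2 - p^2"
    using assms(1) prime_dvd_power[of "int q"] by auto
  ultimately have "r^2 - p^2 = 0"
    using dvd_abs_less_imp_zero by blast
  then show False
    using assms(5) by simp
qed

lemma card_nondegenerate_eliminant_zeros_le_card_Sigma:
  assumes "prime q" "N^2 \<le> q"
  defines "n \<equiv> int N" and "K \<equiv> 49 * int N^4 div int q"
  defines "J \<equiv> {(p, r). \<bar>p\<bar> < n \<and> \<bar>r\<bar> < n \<and> r^2 \<noteq> p^2} \<times> {-K..K}"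
    and "M \<equiv> \<lambda>((p, r), k). (r^2 - p^2)^2 - k * int q"
  shows "card {t \<in> eliminant_zeros q N. \<not> degenerate t} \<le> card (SIGMA j:J. {D. D dvd M j})"
    (is "card ?Z \<le> card (Sigma J ?divs)")
proof -
  define \<phi> where
    "\<phi> = (\<lambda>(a, b, c, d). (((a - b, c - d), eliminant a b c d div int q), c + d - a - b))"
  have q: "int q > 0"
    using assms(1) prime_gt_0_nat by simp
  have nondegenerate_zero: "\<bar>a - b\<bar> < n \<and> \<bar>c - d\<bar> < n \<and> (c - d)^2 \<noteq> (a - b)^2
      \<and> eliminant a b c d = eliminant a b c d div int q * int q \<and> c + d - a - b \<noteq> 0"
    if "(a, b, c, d) \<in> ?Z" for a b c d
  proof -
    have ab: "\<bar>a - b\<bar> < int N" and cd: "\<bar>c - d\<bar> < int N" and T: "(c - d)^2 \<noteq> (a - b)^2"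
      and dvd: "int q dvd eliminant a b c d"
      using that by (auto simp: eliminant_zeros_def degenerate_def)
    have "c + d - a - b \<noteq> 0"
    proof
      assume "c + d - a - b = 0"
      then have "eliminant a b c d = ((c - d)^2 - (a - b)^2)^2"
        using dvd_square_minus_eliminant[of c d a b] by simp
      then show False
        using not_dvd_square_diff_squares[OF assms(1,2) ab cd T] dvd by simp
    qed
    then show ?thesis
      using ab cd T dvd by (simp add: n_def)
  qed
  have "inj_on \<phi> ?Z"
  proof (rule inj_onI)
    fix t t'
    assume "t \<in> ?Z" "t' \<in> ?Z" and eq: "\<phi> t = \<phi> t'"
    obtain a b c d a' b' c' d' where st: "t = (a, b, c, d)" "t' = (a', b', c', d')"
      by (metis prod_cases4)
    then have Z: "(a, b, c, d) \<in> ?Z" "(a', b', c', d') \<in> ?Z"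
      using \<open>t \<in> ?Z\<close> \<open>t' \<in> ?Z\<close> by simp_all
    have "a - b = a' - b'" "c - d = c' - d'" "c + d - a - b = c' + d' - a' - b'"
      and "eliminant a b c d div int q = eliminant a' b' c' d' div int q"
      using eq by (simp_all add: st \<phi>_def)
    moreover from this(4) have "eliminant a b c d = eliminant a' b' c' d'"
      using nondegenerate_zero[OF Z(1)] nondegenerate_zero[OF Z(2)] by metis
    ultimately show "t = t'"
      using nondegenerate_zero[OF Z(1)] unfolding st by (intro eliminant_determines) auto
  qed
  moreover have "\<phi> ` ?Z \<subseteq> Sigma J ?divs"
  proof (rule image_subsetI)
    fix t
    assume t: "t \<in> ?Z"
    obtain a b c d where abcd: "t = (a, b, c, d)"
      by (metis prod_cases4)
    define k where "k = eliminant a b c d div int q"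
    have facts: "\<bar>a - b\<bar> < n" "\<bar>c - d\<bar> < n" "(c - d)^2 \<noteq> (a - b)^2"
      "eliminant a b c d = k * int q"
      using nondegenerate_zero t unfolding abcd k_def by blast+
    have "int q * \<bar>k\<bar> \<le> 49 * n^4"
      using abs_eliminant_le[of a b c d n] t facts(4)
      by (auto simp: abcd eliminant_zeros_def n_def abs_mult mult.commute)
    then have "\<bar>k\<bar> \<le> K"
      using q zdiv_mono1[of "int q * \<bar>k\<bar>" "49 * n^4" "int q"] by (simp add: K_def n_def)
    moreover have "c + d - a - b dvd ((c - d)^2 - (a - b)^2)^2 - k * int q"
      using dvd_square_minus_eliminant[of c d a b] facts(4) by simp
    moreover have "\<phi> t = (((a - b, c - d), k), c + d - a - b)"
      by (simp add: abcd \<phi>_def k_def)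
    ultimately show "\<phi> t \<in> Sigma J ?divs"
      using facts(1-3) by (simp add: J_def M_def abs_le_iff)
  qed
  moreover have "finite (Sigma J ?divs)"
  proof (rule finite_SigmaI)
    have "{(p, r). \<bar>p\<bar> < n \<and> \<bar>r\<bar> < n \<and> r^2 \<noteq> p^2} \<subseteq> {-n..n} \<times> {-n..n}"
      by auto
    then show "finite J"
      unfolding J_def by (auto intro: finite_subset)
    fix j
    assume "j \<in> J"
    then obtain p r k where "j = ((p, r), k)" "\<bar>p\<bar> < n" "\<bar>r\<bar> < n" "r^2 \<noteq> p^2"
      unfolding J_def by auto
    then have "(r^2 - p^2)^2 - k * int q \<noteq> 0"
      using not_dvd_square_diff_squares[OF assms(1,2), of p r] by (auto simp: n_def)
    then show "finite (?divs j)"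
      using \<open>j = ((p, r), k)\<close> by (simp add: M_def)
  qed
  ultimately show ?thesis
    by (intro card_inj_on_le)
qed

lemma card_Sigma_divisors_le:
  fixes M :: "'a \<Rightarrow> int" and C \<delta> Y :: real
  assumes "finite J" "\<And>j. j \<in> J \<Longrightarrow> M j \<noteq> 0" "\<And>j. j \<in> J \<Longrightarrow> \<bar>M j\<bar> \<le> Y"
    and "\<delta> \<ge> 0" "C \<ge> 0"
    and divisor_bound: "\<And>n. n > 0 \<Longrightarrow> real (card {d. d dvd n}) \<le> C * real n powr \<delta>"
  shows "real (card (Sigma J (\<lambda>j. {D. D dvd M j}))) \<le> card J * (2 * C * Y powr \<delta>)"
proof -
  have "real (card (Sigma J (\<lambda>j. {D. D dvd M j}))) = (\<Sum>j\<in>J. real (card {D. D dvd M j}))"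
    using assms(1,2) by (subst card_SigmaI) auto
  also have "\<dots> \<le> (\<Sum>j\<in>J. 2 * C * Y powr \<delta>)"
  proof (rule sum_mono)
    fix j
    assume j: "j \<in> J"
    have "real (card {D. D dvd M j}) \<le> 2 * real (card {d. d dvd nat \<bar>M j\<bar>})"
      using card_int_divisors_le[OF assms(2)[OF j]] by linarith
    also have "\<dots> \<le> 2 * (C * real (nat \<bar>M j\<bar>) powr \<delta>)"
      using divisor_bound[of "nat \<bar>M j\<bar>"] assms(2)[OF j] by simp
    also have "\<dots> \<le> 2 * (C * Y powr \<delta>)"
      using assms(3)[OF j] assms(4,5) by (auto intro!: mult_left_mono powr_mono2)
    finally show "real (card {D. D dvd M j}) \<le> 2 * C * Y powr \<delta>"
      by simp
  qed
  finally show ?thesis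
    by simp
qed

lemma card_nondegenerate_eliminant_zeros:
  fixes C \<delta> :: real
  assumes "prime q" "N^2 \<le> q" "\<delta> \<ge> 0" "C \<ge> 0"
    and divisor_bound: "\<And>n. n > 0 \<Longrightarrow> real (card {d. d dvd n}) \<le> C * real n powr \<delta>"
  shows "real (card {t \<in> eliminant_zeros q N. \<not> degenerate t})
    \<le> 4 * real N^2 * (98 * real N^4 / real q + 1) * (2 * C * (50 * real N^4) powr \<delta>)"
proof -
  define n where "n = int N"
  define K where "K = 49 * int N^4 div int q"
  define PR where "PR = {(p, r). \<bar>p\<bar> < n \<and> \<bar>r\<bar> < n \<and> r^2 \<noteq> p^2}"
  define M where "M = (\<lambda>((p, r), k). (r^2 - p^2)^2 - k * int q)"
  have q: "int q > 0"
    using assms(1) prime_gt_0_nat by simp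
  have "K = int (49 * N^4 div q)"
    by (simp add: K_def zdiv_int)
  moreover have "int (49 * N^4 div q * q) \<le> int (49 * N^4)"
    by (simp only: of_nat_le_iff div_times_less_eq_dividend)
  ultimately have K: "0 \<le> K" "K * int q \<le> 49 * n^4"
    by (simp_all add: n_def)
  have M_bounds: "M j \<noteq> 0 \<and> \<bar>M j\<bar> \<le> 50 * real N^4" if jJ: "j \<in> PR \<times> {-K..K}" for j
  proof -
    obtain p r k where j: "j = ((p, r), k)" "\<bar>p\<bar> < n" "\<bar>r\<bar> < n" "r^2 \<noteq> p^2" "\<bar>k\<bar> \<le> K"
      using jJ by (auto simp: PR_def abs_le_iff)
    have "\<not> int q dvd (r^2 - p^2)^2"
      using not_dvd_square_diff_squares[OF assms(1,2)] j by (simp add: n_def)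
    then have "M j \<noteq> 0"
      by (auto simp: M_def j(1))
    have "\<bar>r^2 - p^2\<bar>^2 \<le> (n^2)^2"
      using abs_diff_squares_less[OF j(2,3)] by (intro power_mono) auto
    moreover have "\<bar>k\<bar> * int q \<le> K * int q"
      using j(5) q by (intro mult_right_mono) auto
    ultimately have "\<bar>(r^2 - p^2)^2\<bar> + \<bar>k * int q\<bar> \<le> 50 * n^4"
      using K(2) by (simp add: abs_mult power2_abs flip: power_mult)
    then have "\<bar>(r^2 - p^2)^2 - k * int q\<bar> \<le> 50 * n^4"
      using abs_triangle_ineq4[of "(r^2 - p^2)^2" "k * int q"] by linarith
    then have "real_of_int \<bar>M j\<bar> \<le> real_of_int (50 * n^4)"
      by (simp only: of_int_le_iff) (simp add: M_def j(1))
    then show ?thesis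
      using \<open>M j \<noteq> 0\<close> by (simp add: n_def)
  qed
  have PR_sub: "PR \<subseteq> {-(n - 1)..n - 1} \<times> {-(n - 1)..n - 1}"
    by (auto simp: PR_def)
  then have "card PR \<le> card ({-(n - 1)..n - 1} \<times> {-(n - 1)..n - 1})"
    by (intro card_mono) auto
  also have "\<dots> = nat (2 * n - 1) * nat (2 * n - 1)"
    by (simp add: card_cartesian_product)
  also have "\<dots> \<le> (2 * N) * (2 * N)"
    by (intro mult_le_mono; simp add: n_def nat_le_iff)
  finally have "card PR \<le> 4 * N^2"
    by (simp add: power2_eq_square)
  then have card_PR: "real (card PR) \<le> 4 * real N^2"
    using of_nat_mono[where 'a = real] by fastforce
  have "real (card {-K..K}) = 2 * real_of_int K + 1"
    using K(1) by simp
  also have "\<dots> \<le> 98 * real N^4 / real q + 1"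
  proof -
    have "real_of_int (K * int q) \<le> real_of_int (49 * n^4)"
      using K(2) by (simp only: of_int_le_iff)
    then show ?thesis
      using q by (simp add: n_def field_simps)
  qed
  finally have card_K: "real (card {-K..K}) \<le> 98 * real N^4 / real q + 1" .
  have "real (card {t \<in> eliminant_zeros q N. \<not> degenerate t})
      \<le> real (card (SIGMA j : PR \<times> {-K..K}. {D. D dvd M j}))"
    using card_nondegenerate_eliminant_zeros_le_card_Sigma[OF assms(1,2)]
    by (simp add: PR_def M_def K_def n_def)
  also have "\<dots> \<le> real (card (PR \<times> {-K..K})) * (2 * C * (50 * real N^4) powr \<delta>)"
    using M_bounds assms(3,4) divisor_bound finite_subset[OF PR_sub]
    by (intro card_Sigma_divisors_le) auto
  also have "\<dots> \<le> 4 * real N^2 * (98 * real N^4 / real q + 1) * (2 * C * (50 * real N^4) powr \<delta>)"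
  proof (rule mult_right_mono)
    show "real (card (PR \<times> {-K..K})) \<le> 4 * real N^2 * (98 * real N^4 / real q + 1)"
      unfolding card_cartesian_product of_nat_mult using card_PR card_K by (intro mult_mono) auto
  qed (use assms(4) in simp)
  finally show ?thesis .
qed

lemma Eq_le_explicit_bound:
  fixes C \<delta> :: real
  assumes "prime q" "q > 2" "N^2 \<le> q" "\<delta> \<ge> 0" "C \<ge> 0"
    and "\<And>n. n > 0 \<Longrightarrow> real (card {d. d dvd n}) \<le> C * real n powr \<delta>"
  shows "real (Eq q N)
    \<le> 8 * (3 * real N^2 + 4 * real N^2 * (98 * real N^4 / real q + 1) * (2 * C * (50 * real N^4) powr \<delta>))"
proof -
  let ?Z0 = "{t \<in> eliminant_zeros q N. degenerate t}"
  let ?Z1 = "{t \<in> eliminant_zeros q N. \<not> degenerate t}"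
  have "card (eliminant_zeros q N) \<le> card (?Z0 \<union> ?Z1)"
    by (intro card_mono) (auto intro: finite_subset[OF _ finite_eliminant_zeros])
  also have "\<dots> \<le> card ?Z0 + card ?Z1"
    by (rule card_Un_le)
  finally have "8 * card (eliminant_zeros q N) \<le> 8 * (card ?Z0 + card ?Z1)"
    by (rule mult_le_mono2)
  with Eq_le_card_eliminant_zeros[OF assms(1)] have "Eq q N \<le> 8 * (card ?Z0 + card ?Z1)"
    by (rule order_trans)
  then have "real (Eq q N) \<le> real (8 * (card ?Z0 + card ?Z1))"
    by (simp only: of_nat_le_iff)
  then have "real (Eq q N) \<le> 8 * (real (card ?Z0) + real (card ?Z1))"
    by simp
  also have "\<dots> \<le> 8 * (3 * real N^2 + 4 * real N^2 * (98 * real N^4 / real q + 1)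
      * (2 * C * (50 * real N^4) powr \<delta>))"
  proof (intro mult_left_mono add_mono)
    show "real (card ?Z0) \<le> 3 * real N^2"
      using of_nat_mono[where 'a = real, OF card_degenerate_eliminant_zeros[OF assms(1-3)]] by simp
    show "real (card ?Z1)
      \<le> 4 * real N^2 * (98 * real N^4 / real q + 1) * (2 * C * (50 * real N^4) powr \<delta>)"
      using assms by (intro card_nondegenerate_eliminant_zeros) auto
  qed simp
  finally show ?thesis .
qed

lemma explicit_bound_le_powr:
  fixes x y C \<epsilon> :: real
  assumes "\<epsilon> > 0" "C \<ge> 0" "x \<ge> 1" "y \<ge> 0" "y^2 \<le> x"
    and "(24 + 6272 * C * 50 powr (\<epsilon> / 4)) powr (2 / \<epsilon>) \<le> x"
  shows "8 * (3 * y^2 + 4 * y^2 * (98 * y^4 / x + 1) * (2 * C * (50 * y^4) powr (\<epsilon> / 4)))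
    \<le> y^6 * x powr (-1 + \<epsilon>) + y^2 * x powr \<epsilon>"
proof -
  define G where "G = y^6 / x + y^2"
  define X where "X = x powr (\<epsilon> / 2)"
  define P where "P = 4 * y^2 * (98 * y^4 / x + 1) * (2 * C * (50 * y^4) powr (\<epsilon> / 4))"
  have G: "y^2 \<le> G" "0 \<le> G"
    using assms(3,4) by (simp_all add: G_def)
  have X: "1 \<le> X"
    using assms(1,3) by (simp add: X_def ge_one_powr_ge_zero)
  have "((24 + 6272 * C * 50 powr (\<epsilon> / 4)) powr (2 / \<epsilon>)) powr (\<epsilon> / 2) \<le> X"
    unfolding X_def using assms(1,6) by (intro powr_mono2) auto
  then have constant_le_X: "24 + 6272 * C * 50 powr (\<epsilon> / 4) \<le> X"
    using assms(1,2) by (simp add: powr_powr)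
  have "(y^2)^2 \<le> x^2"
    using assms(4,5) by (intro power_mono) auto
  then have "(y^4) powr (\<epsilon> / 4) \<le> (x powr 2) powr (\<epsilon> / 4)"
    using assms(1,3) by (intro powr_mono2) (auto simp flip: power_mult)
  also have "\<dots> = X"
    by (simp add: X_def powr_powr)
  finally have divisor_factor: "2 * C * (50 * y^4) powr (\<epsilon> / 4) \<le> 2 * C * (50 powr (\<epsilon> / 4) * X)"
    using assms(2) by (simp add: powr_mult mult_left_mono)
  have count_factor: "4 * y^2 * (98 * y^4 / x + 1) \<le> 392 * G"
    using assms(3,4) by (simp add: G_def field_simps power_add [symmetric])
  have "P \<le> 392 * G * (2 * C * (50 powr (\<epsilon> / 4) * X))"
    unfolding P_def using assms(2,3,4) by (intro mult_mono'[OF count_factor divisor_factor]) auto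
  moreover have "y^2 \<le> G * X"
    using G X by (metis mult_left_mono mult.right_neutral order_trans)
  ultimately have "8 * (3 * y^2 + P) \<le> (24 + 6272 * C * 50 powr (\<epsilon> / 4)) * X * G"
    by (simp add: algebra_simps)
  also have "\<dots> \<le> X * X * G"
    using constant_le_X X G(2) by (intro mult_right_mono) auto
  also have "\<dots> = y^6 * x powr (-1 + \<epsilon>) + y^2 * x powr \<epsilon>"
  proof -
    have "X * X = x powr \<epsilon>"
      by (simp add: X_def flip: powr_add)
    moreover have "x powr (-1 + \<epsilon>) = x powr \<epsilon> / x"
      using assms(3) by (simp add: powr_diff)
    ultimately show ?thesis
      by (simp add: G_def algebra_simps)
  qed
  finally show ?thesis
    by (simp add: P_def)
qed

theorem propositionA1:
  "\<forall>\<epsilon>>0. \<exists>Q. \<forall>q N. prime q \<longrightarrow> real q \<ge> Q \<longrightarrow> 0 < N \<longrightarrow> real N \<le> sqrt (real q) \<longrightarrow>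
     real (Eq q N) \<le> real N ^ 6 * real q powr (-1 + \<epsilon>) + real N ^ 2 * real q powr \<epsilon>"
proof (intro allI impI)
  fix \<epsilon> :: real
  assume "\<epsilon> > 0"
  then obtain C where C: "C > 0" "\<And>n. n > 0 \<Longrightarrow> real (card {d. d dvd n}) \<le> C * real n powr (\<epsilon> / 4)"
    using divisor_count_bound[of "\<epsilon> / 4"] by auto
  show "\<exists>Q. \<forall>q N. prime q \<longrightarrow> real q \<ge> Q \<longrightarrow> 0 < N \<longrightarrow> real N \<le> sqrt (real q) \<longrightarrow>
     real (Eq q N) \<le> real N ^ 6 * real q powr (-1 + \<epsilon>) + real N ^ 2 * real q powr \<epsilon>"
  proof (intro exI allI impI)
    fix q N :: nat
    assume q: "prime q" "max 3 ((24 + 6272 * C * 50 powr (\<epsilon> / 4)) powr (2 / \<epsilon>)) \<le> real q"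
      and N: "real N \<le> sqrt (real q)"
    have "real N ^ 2 \<le> real q"
      using sqrt_ge_absD[of "real N" "real q"] N by (simp only: abs_of_nat)
    then have "N^2 \<le> q"
      by (metis of_nat_le_iff of_nat_power)
    have "real (Eq q N) \<le> 8 * (3 * real N^2 + 4 * real N^2 * (98 * real N^4 / real q + 1)
        * (2 * C * (50 * real N^4) powr (\<epsilon> / 4)))"
      using q(2) \<open>\<epsilon> > 0\<close> C(1) by (intro Eq_le_explicit_bound[OF q(1) _ \<open>N^2 \<le> q\<close> _ _ C(2)]) auto
    also have "\<dots> \<le> real N ^ 6 * real q powr (-1 + \<epsilon>) + real N ^ 2 * real q powr \<epsilon>"
      using q(2) \<open>\<epsilon> > 0\<close> C(1) \<open>real N ^ 2 \<le> real q\<close>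
      by (intro explicit_bound_le_powr) auto
    finally show "real (Eq q N) \<le> real N ^ 6 * real q powr (-1 + \<epsilon>) + real N ^ 2 * real q powr \<epsilon>" .
  qed
qed

end
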